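(* Let $X,Y$ be u.l.f.\ metric spaces and let $\alpha\colon X\to\mathrm{Fin}(Y)$ and $\beta\colon Y\to\mathrm{Fin}(X)$ be functions such that (Bij1) whenever $f\colon X\to Y$ and $g\colon Y\to X$ satisfy $f(x)\in\alpha(x)$ for all $x\in X$ and $g(y)\in\beta(y)$ for all $y\in Y$, then $f$ and $g$ are mutually inverse coarse equivalences (in particular all $\alpha(x)$, $\beta(y)$ are nonempty); and (Bij2) for every finite $A\subseteq X$ and finite $B\subseteq Y$, $|A|\le|\bigcup_{x\in A}\alpha(x)|$ and $|B|\le|\bigcup_{y\in B}\beta(y)|$. Then every function $f\colon X\to Y$ with $f(x)\in\alpha(x)$ for all $x\in X$ is close to a bijective coarse equivalence $X\to Y$.
   Context: $\mathrm{Fin}(Y)$ is the set of finite subsets of $Y$. A map $f\colon X\to Y$ is coarse if for every $r>0$ there is $s>0$ with $d_X(x,x')\le r\Rightarrow d_Y(f(x),f(x'))\le s$; $f,f'$ are close if $\sup_x d_Y(f(x),f'(x))<\infty$; coarse maps $f\colon X\to Y$, $g\colon Y\to X$ are mutually inverse coarse equivalences if $f\circ g$ is close to $\mathrm{Id}_Y$ and $g\circ f$ close to $\mathrm{Id}_X$. *)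

theory Defs
  imports "HOL-Analysis.Analysis"
begin

definition ulf :: "'a set \<Rightarrow> ('a \<Rightarrow> 'a \<Rightarrow> real) \<Rightarrow> bool" where
  "ulf X d \<longleftrightarrow> (\<forall>r>0. \<exists>N::nat. \<forall>x\<in>X.
      finite {y\<in>X. d x y \<le> r} \<and> card {y\<in>X. d x y \<le> r} \<le> N)"

definition coarse_map ::
  "'a set \<Rightarrow> ('a \<Rightarrow> 'a \<Rightarrow> real) \<Rightarrow> 'b set \<Rightarrow> ('b \<Rightarrow> 'b \<Rightarrow> real) \<Rightarrow> ('a \<Rightarrow> 'b) \<Rightarrow> bool" where
  "coarse_map X dX Y dY f \<longleftrightarrow> (\<forall>x\<in>X. f x \<in> Y) \<and>
     (\<forall>r>0. \<exists>s>0. \<forall>x\<in>X. \<forall>x'\<in>X. dX x x' \<le> r \<longrightarrow> dY (f x) (f x') \<le> s)"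

definition close_maps ::
  "'a set \<Rightarrow> ('b \<Rightarrow> 'b \<Rightarrow> real) \<Rightarrow> ('a \<Rightarrow> 'b) \<Rightarrow> ('a \<Rightarrow> 'b) \<Rightarrow> bool" where
  "close_maps X dY f f' \<longleftrightarrow> (\<exists>C. \<forall>x\<in>X. dY (f x) (f' x) \<le> C)"

definition mutually_inverse_coarse_equivs ::
  "'a set \<Rightarrow> ('a \<Rightarrow> 'a \<Rightarrow> real) \<Rightarrow> 'b set \<Rightarrow> ('b \<Rightarrow> 'b \<Rightarrow> real)
     \<Rightarrow> ('a \<Rightarrow> 'b) \<Rightarrow> ('b \<Rightarrow> 'a) \<Rightarrow> bool" where
  "mutually_inverse_coarse_equivs X dX Y dY f g \<longleftrightarrow>
     coarse_map X dX Y dY f \<and> coarse_map Y dY X dX g \<and>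
     close_maps Y dY (f \<circ> g) id \<and> close_maps X dX (g \<circ> f) id"

definition coarse_equivalence ::
  "'a set \<Rightarrow> ('a \<Rightarrow> 'a \<Rightarrow> real) \<Rightarrow> 'b set \<Rightarrow> ('b \<Rightarrow> 'b \<Rightarrow> real) \<Rightarrow> ('a \<Rightarrow> 'b) \<Rightarrow> bool" where
  "coarse_equivalence X dX Y dY f \<longleftrightarrow> (\<exists>g. mutually_inverse_coarse_equivs X dX Y dY f g)"

end

(* Hall's marriage theorem for countable families of finite sets, proved by a greedy
   argument that keeps Hall's condition for the unmatched elements, gives injective
   selections f' of alpha and g of beta. By (Bij1) all of f, f' and g are coarse
   equivalences with g as coarse inverse, so f' is close to f, and so is g^-1 on g(Y)
   since f g is close to the identity. The Schroeder-Bernstein bijection h glues f'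
   and g^-1 together; hence h is close to f, and a map close to a coarse equivalence
   is one. *)
theory Submission
  imports Defs
begin

definition hall_condition :: "'a set \<Rightarrow> ('a \<Rightarrow> 'b set) \<Rightarrow> bool" where
  "hall_condition S A \<longleftrightarrow> (\<forall>T. T \<subseteq> S \<and> finite T \<longrightarrow> card T \<le> card (\<Union>x\<in>T. A x))"

definition hall_critical :: "('a \<Rightarrow> 'b set) \<Rightarrow> 'a set \<Rightarrow> bool" where
  "hall_critical A T \<longleftrightarrow> finite T \<and> card (\<Union>x\<in>T. A x) = card T"

lemma hall_conditionD:
  "hall_condition S A \<Longrightarrow> T \<subseteq> S \<Longrightarrow> finite T \<Longrightarrow> card T \<le> card (\<Union>x\<in>T. A x)"
  unfolding hall_condition_def by blast

lemma hall_critical_Un: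
  assumes hall: "hall_condition S A" and fin: "\<forall>x\<in>S. finite (A x)"
    and T: "T \<subseteq> S" "hall_critical A T" and T': "T' \<subseteq> S" "hall_critical A T'"
  shows "hall_critical A (T \<union> T')"
proof -
  let ?N = "\<Union>x\<in>T. A x" and ?N' = "\<Union>x\<in>T'. A x"
  have finT: "finite T" "finite T'" and crit: "card ?N = card T" "card ?N' = card T'"
    using T T' unfolding hall_critical_def by auto
  have finN: "finite ?N" "finite ?N'"
    using finT T T' fin by (auto intro: finite_subset)
  have "card (T \<inter> T') \<le> card (\<Union>x\<in>T \<inter> T'. A x)"
    using hall_conditionD[OF hall, of "T \<inter> T'"] T finT by auto
  also have "\<dots> \<le> card (?N \<inter> ?N')"
    by (rule card_mono) (use finN in auto)
  finally have "card (T \<inter> T') \<le> card (?N \<inter> ?N')" .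
  moreover have "card (T \<union> T') \<le> card (?N \<union> ?N')"
    using hall_conditionD[OF hall, of "T \<union> T'"] T T' finT by simp
  moreover have "card (T \<union> T') + card (T \<inter> T') = card T + card T'"
    using card_Un_Int[OF finT] by simp
  moreover have "card (?N \<union> ?N') + card (?N \<inter> ?N') = card ?N + card ?N'"
    using card_Un_Int[OF finN] by simp
  ultimately show ?thesis
    using crit finT unfolding hall_critical_def by simp
qed

lemma hall_critical_UN:
  assumes hall: "hall_condition S A" and fin: "\<forall>x\<in>S. finite (A x)"
    and "finite I" and T: "\<forall>i\<in>I. T i \<subseteq> S \<and> hall_critical A (T i)"
  shows "hall_critical A (\<Union>i\<in>I. T i)"
  using \<open>finite I\<close> T
proof (induction I rule: finite_induct)
  case empty
  then show ?case by (simp add: hall_critical_def)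
next
  case (insert i I)
  then show ?case
    using hall_critical_Un[OF hall fin, of "T i" "\<Union>i\<in>I. T i"] by auto
qed

lemma hall_violation_critical:
  assumes hall: "hall_condition S A" and fin: "\<forall>x\<in>S. finite (A x)"
    and T: "T \<subseteq> S" "finite T" "card (\<Union>x\<in>T. A x - {y}) < card T"
  shows "y \<in> (\<Union>x\<in>T. A x) \<and> hall_critical A T"
proof -
  have "finite (\<Union>x\<in>T. A x)"
    using T fin by (auto intro: finite_subset)
  moreover have "(\<Union>x\<in>T. A x - {y}) = (\<Union>x\<in>T. A x) - {y}"
    by auto
  moreover have "card T \<le> card (\<Union>x\<in>T. A x)"
    using hall_conditionD[OF hall T(1,2)] .
  ultimately show ?thesis
    using T(3) card_Diff1_le[of "\<Union>x\<in>T. A x" y] card_Diff_singleton[of y "\<Union>x\<in>T. A x"]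
    unfolding hall_critical_def by (cases "y \<in> (\<Union>x\<in>T. A x)") (auto simp: T(2))
qed

lemma hall_condition_remove:
  assumes hall: "hall_condition S A" and fin: "\<forall>x\<in>S. finite (A x)" and x: "x \<in> S"
  shows "\<exists>y\<in>A x. hall_condition (S - {x}) (\<lambda>z. A z - {y})"
proof (rule ccontr)
  assume "\<not> ?thesis"
  then have "\<forall>y\<in>A x. \<exists>T. T \<subseteq> S - {x} \<and> finite T \<and> card (\<Union>z\<in>T. A z - {y}) < card T"
    unfolding hall_condition_def by (auto simp: not_le)
  then obtain T where T: "\<And>y. y \<in> A x \<Longrightarrow>
      T y \<subseteq> S - {x} \<and> finite (T y) \<and> card (\<Union>z\<in>T y. A z - {y}) < card (T y)"
    by metis
  have crit: "y \<in> (\<Union>z\<in>T y. A z) \<and> hall_critical A (T y)" if "y \<in> A x" for y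
    using hall_violation_critical[OF hall fin] T[OF that] by blast
  define T\<^sub>x where "T\<^sub>x = (\<Union>y\<in>A x. T y)"
  \<comment> \<open>The witnesses against all \<open>y \<in> A x\<close> form a critical set whose neighbours
    already cover \<open>A x\<close>; adding \<open>x\<close> to it then violates Hall's condition.\<close>
  have "hall_critical A T\<^sub>x"
    unfolding T\<^sub>x_def
    by (rule hall_critical_UN[OF hall fin]) (use fin x T crit in auto)
  moreover have "(\<Union>z\<in>insert x T\<^sub>x. A z) = (\<Union>z\<in>T\<^sub>x. A z)"
    using crit unfolding T\<^sub>x_def by blast
  moreover have "x \<notin> T\<^sub>x" "T\<^sub>x \<subseteq> S"
    using T unfolding T\<^sub>x_def by auto
  ultimately show False
    using hall_conditionD[OF hall, of "insert x T\<^sub>x"] x unfolding hall_critical_def by auto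
qed

lemma countable_hall_inj_selection:
  assumes S: "countable S" and fin: "\<forall>x\<in>S. finite (A x)" and hall: "hall_condition S A"
  shows "\<exists>f. inj_on f S \<and> (\<forall>x\<in>S. f x \<in> A x)"
proof (cases "S = {}")
  case True
  then show ?thesis by simp
next
  case False
  define e where "e = from_nat_into S"
  have e: "range e = S"
    using False S unfolding e_def by (rule range_from_nat_into)
  \<comment> \<open>Greedy matching: \<open>e n\<close> is matched at step \<open>n\<close> unless it already was; the
    remaining elements \<open>R n\<close> keep Hall's condition for the unused values \<open>A z - U n\<close>.\<close>
  define R where "R n = S - e ` {..<n}" for n
  define pick where
    "pick n V = (SOME y. y \<in> A (e n) - V \<and> hall_condition (R (Suc n)) (\<lambda>z. A z - insert y V))"
    for n V
  define U where "U = rec_nat {} (\<lambda>n V. if e n \<in> R n then insert (pick n V) V else V)"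
  have U_Suc: "U (Suc n) = (if e n \<in> R n then insert (pick n (U n)) (U n) else U n)" for n
    by (simp add: U_def)
  have R_Suc: "R (Suc n) = R n - {e n}" for n
    by (auto simp: R_def lessThan_Suc)
  have pick: "pick n V \<in> A (e n) - V \<and> hall_condition (R (Suc n)) (\<lambda>z. A z - insert (pick n V) V)"
    if hall_V: "hall_condition (R n) (\<lambda>z. A z - V)" and en: "e n \<in> R n" for n V
  proof -
    obtain y where "y \<in> A (e n) - V" "hall_condition (R n - {e n}) (\<lambda>z. A z - V - {y})"
      using hall_condition_remove[OF hall_V _ en] fin unfolding R_def by auto
    moreover have "(\<lambda>z. A z - insert y V) = (\<lambda>z. A z - V - {y})"
      by auto
    ultimately have "\<exists>y. y \<in> A (e n) - V \<and> hall_condition (R (Suc n)) (\<lambda>z. A z - insert y V)"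
      by (auto simp: R_Suc)
    then show ?thesis
      unfolding pick_def by (rule someI_ex)
  qed
  have hall_R: "hall_condition (R n) (\<lambda>z. A z - U n)" for n
  proof (induction n)
    case 0
    then show ?case using hall by (simp add: R_def U_def)
  next
    case (Suc n)
    then show ?case
      using pick[OF Suc] by (cases "e n \<in> R n") (auto simp: U_Suc R_Suc)
  qed
  define L where "L x = (LEAST n. e n = x)" for x
  have L: "e (L x) = x" "x \<in> R (L x)" if "x \<in> S" for x
  proof -
    show "e (L x) = x"
      unfolding L_def by (rule LeastI_ex) (use e that in blast)
    have "e k \<noteq> x" if "k < L x" for k
      using not_less_Least[of k "\<lambda>n. e n = x"] that unfolding L_def by blast
    then show "x \<in> R (L x)"
      using \<open>x \<in> S\<close> unfolding R_def by auto
  qed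
  define f where "f x = pick (L x) (U (L x))" for x
  have f: "f x \<in> A x - U (L x)" "f x \<in> U (Suc (L x))" if "x \<in> S" for x
  proof -
    have "e (L x) \<in> R (L x)"
      using L[OF that] by simp
    from pick[OF hall_R this] this show "f x \<in> A x - U (L x)" "f x \<in> U (Suc (L x))"
      using L(1)[OF that] unfolding f_def by (simp_all add: U_Suc)
  qed
  have "mono U"
    by (rule incseq_SucI) (simp add: U_Suc subset_insertI)
  then have f_new: "f x \<noteq> f x'" if "x \<in> S" "x' \<in> S" "L x < L x'" for x x'
    using f[OF that(1)] f[OF that(2)] monoD[of U "Suc (L x)" "L x'"] that(3) by auto
  have "inj_on f S"
  proof (rule inj_onI, rule ccontr)
    fix x x' assume "x \<in> S" "x' \<in> S" "f x = f x'" "x \<noteq> x'"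
    then show False
      using f_new L(1) by (metis linorder_neq_iff)
  qed
  then show ?thesis
    using f by blast
qed

lemma Schroeder_Bernstein_piecewise:
  assumes f: "inj_on f A" "f ` A \<subseteq> B" and g: "inj_on g B" "g ` B \<subseteq> A"
  shows "\<exists>h. bij_betw h A B \<and> (\<forall>x\<in>A. h x = f x \<or> (h x \<in> B \<and> g (h x) = x))"
proof -
  define C where "C = lfp (\<lambda>C. A - g ` (B - f ` C))"
  have C: "C = A - g ` (B - f ` C)"
    unfolding C_def by (rule lfp_unfold) (blast intro: monoI)
  then have A_C: "A - C = g ` (B - f ` C)"
    using g(2) by blast
  have g_inj: "inj_on g (B - f ` C)"
    using g(1) by (rule inj_on_subset) blast
  define g' where "g' = the_inv_into (B - f ` C) g"
  have g': "bij_betw g' (A - C) (B - f ` C)"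
    unfolding g'_def A_C by (rule bij_betw_the_inv_into[OF inj_on_imp_bij_betw[OF g_inj]])
  have g'_inverse: "g (g' x) = x" if "x \<in> A - C" for x
    using f_the_inv_into_f[OF g_inj] that unfolding g'_def A_C by blast
  define h where "h x = (if x \<in> C then f x else g' x)" for x
  have "bij_betw h C (f ` C)"
    using inj_on_subset[OF f(1)] C unfolding h_def by (auto simp: bij_betw_def inj_on_def)
  moreover have "bij_betw h (A - C) (B - f ` C)"
    using g' by (rule bij_betw_cong[THEN iffD1, rotated]) (simp add: h_def)
  ultimately have "bij_betw h (C \<union> (A - C)) (f ` C \<union> (B - f ` C))"
    by (rule bij_betw_combine) blast
  moreover have "C \<subseteq> A" "f ` C \<subseteq> B"
    using C f(2) by blast+
  ultimately have "bij_betw h A B"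
    by (simp add: Un_absorb1)
  moreover have "h x = f x \<or> (h x \<in> B \<and> g (h x) = x)" if "x \<in> A" for x
    using that g' g'_inverse unfolding h_def by (auto dest: bij_betwE)
  ultimately show ?thesis
    by blast
qed

lemma ulf_countable:
  assumes "ulf X d"
  shows "countable X"
proof (cases "X = {}")
  case False
  then obtain x\<^sub>0 where "x\<^sub>0 \<in> X" by auto
  then have "finite {x\<in>X. d x\<^sub>0 x \<le> real (Suc n)}" for n
    using assms unfolding ulf_def by (metis of_nat_0_less_iff zero_less_Suc)
  then have "countable (\<Union>n. {x\<in>X. d x\<^sub>0 x \<le> real (Suc n)})"
    by (blast intro: countable_finite)
  moreover have "X \<subseteq> (\<Union>n. {x\<in>X. d x\<^sub>0 x \<le> real (Suc n)})"
  proof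
    fix x assume "x \<in> X"
    moreover have "d x\<^sub>0 x \<le> real (Suc (nat \<lceil>d x\<^sub>0 x\<rceil>))"
      using real_nat_ceiling_ge[of "d x\<^sub>0 x"] by simp
    ultimately show "x \<in> (\<Union>n. {x\<in>X. d x\<^sub>0 x \<le> real (Suc n)})"
      by blast
  qed
  ultimately show ?thesis
    by (rule countable_subset[rotated])
qed simp

lemma coarse_map_image_subset: "coarse_map X dX Y dY f \<Longrightarrow> f ` X \<subseteq> Y"
  unfolding coarse_map_def by blast

lemma close_maps_sym:
  assumes "Metric_space Y d" "close_maps X d f g"
  shows "close_maps X d g f"
  using assms Metric_space.commute unfolding close_maps_def by metis

lemma close_maps_trans:
  assumes "Metric_space Y d" "f ` X \<subseteq> Y" "g ` X \<subseteq> Y" "h ` X \<subseteq> Y"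
    and "close_maps X d f g" "close_maps X d g h"
  shows "close_maps X d f h"
proof -
  obtain C D where C: "\<forall>x\<in>X. d (f x) (g x) \<le> C" and D: "\<forall>x\<in>X. d (g x) (h x) \<le> D"
    using assms(5,6) unfolding close_maps_def by blast
  have "d (f x) (h x) \<le> C + D" if "x \<in> X" for x
    using Metric_space.triangle[OF assms(1), of "f x" "g x" "h x"] C D assms(2-4) that
    by fastforce
  then show ?thesis unfolding close_maps_def by blast
qed

lemma close_maps_comp_right:
  assumes "close_maps Y d f f'" "g ` X \<subseteq> Y"
  shows "close_maps X d (f \<circ> g) (f' \<circ> g)"
  using assms unfolding close_maps_def by (metis comp_apply image_subset_iff)

lemma close_maps_comp_left:
  assumes "coarse_map Y dY Z dZ g" "f ` X \<subseteq> Y" "f' ` X \<subseteq> Y" "close_maps X dY f f'"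
  shows "close_maps X dZ (g \<circ> f) (g \<circ> f')"
proof -
  obtain C where C: "\<forall>x\<in>X. dY (f x) (f' x) \<le> max C 1"
    using assms(4) unfolding close_maps_def by (meson max.coboundedI1)
  obtain s where "\<forall>y\<in>Y. \<forall>y'\<in>Y. dY y y' \<le> max C 1 \<longrightarrow> dZ (g y) (g y') \<le> s"
    using assms(1) unfolding coarse_map_def by (meson less_max_iff_disj zero_less_one)
  then show ?thesis
    using C assms(2,3) unfolding close_maps_def by (metis comp_apply image_subset_iff)
qed

lemma coarse_map_close:
  assumes "Metric_space Y dY" "coarse_map X dX Y dY f" "h ` X \<subseteq> Y" "close_maps X dY f h"
  shows "coarse_map X dX Y dY h"
  unfolding coarse_map_def
proof (intro conjI allI impI)
  show "\<forall>x\<in>X. h x \<in> Y" using assms(3) by blast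
  obtain C where C: "\<forall>x\<in>X. dY (f x) (h x) \<le> C"
    using assms(4) unfolding close_maps_def by blast
  fix r :: real assume "r > 0"
  then obtain s where s: "\<forall>x\<in>X. \<forall>x'\<in>X. dX x x' \<le> r \<longrightarrow> dY (f x) (f x') \<le> s"
    using assms(2) unfolding coarse_map_def by blast
  have "dY (h x) (h x') \<le> C + s + C" if "x \<in> X" "x' \<in> X" "dX x x' \<le> r" for x x'
  proof -
    have "dY (h x) (h x') \<le> dY (h x) (f x) + dY (f x) (f x') + dY (f x') (h x')"
      using Metric_space.triangle[OF assms(1)] coarse_map_image_subset[OF assms(2)] assms(3) that
      by (smt (verit, best) image_subset_iff)
    then show ?thesis
      using C s that Metric_space.commute[OF assms(1)] by (smt (verit, best))
  qed
  then show "\<exists>s>0. \<forall>x\<in>X. \<forall>x'\<in>X. dX x x' \<le> r \<longrightarrow> dY (h x) (h x') \<le> s"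
    by (meson less_max_iff_disj max.coboundedI1 zero_less_one)
qed

lemma mutually_inverse_coarse_equivs_close:
  assumes mX: "Metric_space X dX" and mY: "Metric_space Y dY"
    and fg: "mutually_inverse_coarse_equivs X dX Y dY f g"
    and h: "h ` X \<subseteq> Y" "close_maps X dY f h"
  shows "mutually_inverse_coarse_equivs X dX Y dY h g"
proof -
  have f: "coarse_map X dX Y dY f" and g: "coarse_map Y dY X dX g"
    and fg_id: "close_maps Y dY (f \<circ> g) id" and gf_id: "close_maps X dX (g \<circ> f) id"
    using fg unfolding mutually_inverse_coarse_equivs_def by auto
  have fX: "f ` X \<subseteq> Y" and gY: "g ` Y \<subseteq> X"
    using f g by (simp_all add: coarse_map_image_subset)
  have hgY: "(h \<circ> g) ` Y \<subseteq> Y" and fgY: "(f \<circ> g) ` Y \<subseteq> Y"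
    and ghX: "(g \<circ> h) ` X \<subseteq> X" and gfX: "(g \<circ> f) ` X \<subseteq> X"
    using h(1) fX gY by (auto simp: image_subset_iff)
  have "close_maps Y dY (h \<circ> g) (f \<circ> g)"
    using close_maps_comp_right[OF close_maps_sym[OF mY h(2)] gY] .
  then have hg_id: "close_maps Y dY (h \<circ> g) id"
    using close_maps_trans[OF mY hgY fgY _ _ fg_id] by simp
  have "close_maps X dX (g \<circ> h) (g \<circ> f)"
    using close_maps_comp_left[OF g h(1) fX close_maps_sym[OF mY h(2)]] .
  then have gh_id: "close_maps X dX (g \<circ> h) id"
    using close_maps_trans[OF mX ghX gfX _ _ gf_id] by simp
  show ?thesis
    unfolding mutually_inverse_coarse_equivs_def
    using coarse_map_close[OF mY f h] g hg_id gh_id by blast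
qed

lemma coarse_inverses_close:
  assumes mY: "Metric_space Y dY"
    and "mutually_inverse_coarse_equivs X dX Y dY f g"
    and "mutually_inverse_coarse_equivs X dX Y dY f' g"
  shows "close_maps X dY f f'"
proof -
  have f: "coarse_map X dX Y dY f" and f': "coarse_map X dX Y dY f'" and g: "coarse_map Y dY X dX g"
    and gf_id: "close_maps X dX (g \<circ> f) id" and f'g_id: "close_maps Y dY (f' \<circ> g) id"
    using assms unfolding mutually_inverse_coarse_equivs_def by auto
  have fX: "f ` X \<subseteq> Y" and f'X: "f' ` X \<subseteq> Y" and gY: "g ` Y \<subseteq> X"
    using f f' g by (simp_all add: coarse_map_image_subset)
  have gfX: "(g \<circ> f) ` X \<subseteq> X"
    using fX gY by (auto simp: image_subset_iff)
  have "close_maps X dY f (f' \<circ> g \<circ> f)"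
    using close_maps_sym[OF mY close_maps_comp_right[OF f'g_id fX]] by simp
  moreover have "close_maps X dY (f' \<circ> g \<circ> f) f'"
    using close_maps_comp_left[OF f' gfX _ gf_id] by (simp add: comp_assoc)
  moreover have "(f' \<circ> g \<circ> f) ` X \<subseteq> Y"
    using fX gY f'X by (auto simp: image_subset_iff)
  ultimately show ?thesis
    using close_maps_trans[OF mY fX _ f'X] by blast
qed

lemma close_maps_piecewise:
  assumes "close_maps X dY f f'" "close_maps Y dY (f \<circ> g) id"
    and "\<forall>x\<in>X. h x = f' x \<or> (h x \<in> Y \<and> g (h x) = x)"
  shows "close_maps X dY f h"
proof -
  obtain C D where C: "\<forall>x\<in>X. dY (f x) (f' x) \<le> C" and D: "\<forall>y\<in>Y. dY (f (g y)) y \<le> D"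
    using assms(1,2) unfolding close_maps_def by auto
  have "dY (f x) (h x) \<le> max C D" if "x \<in> X" for x
    using assms(3) C D that by (metis max.coboundedI1 max.coboundedI2)
  then show ?thesis unfolding close_maps_def by blast
qed

theorem lemma3p4:
  fixes X :: "'a set" and dX :: "'a \<Rightarrow> 'a \<Rightarrow> real"
    and Y :: "'b set" and dY :: "'b \<Rightarrow> 'b \<Rightarrow> real"
    and \<alpha> :: "'a \<Rightarrow> 'b set" and \<beta> :: "'b \<Rightarrow> 'a set"
  assumes mX: "Metric_space X dX" and mY: "Metric_space Y dY"
    and ulfX: "ulf X dX" and ulfY: "ulf Y dY"
    and alpha_fin: "\<forall>x\<in>X. \<alpha> x \<subseteq> Y \<and> finite (\<alpha> x)"
    and beta_fin: "\<forall>y\<in>Y. \<beta> y \<subseteq> X \<and> finite (\<beta> y)"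
    and Bij1: "\<forall>f g. (\<forall>x\<in>X. f x \<in> \<alpha> x) \<and> (\<forall>y\<in>Y. g y \<in> \<beta> y) \<longrightarrow>
                 mutually_inverse_coarse_equivs X dX Y dY f g"
    and Bij2a: "\<forall>A. A \<subseteq> X \<and> finite A \<longrightarrow> card A \<le> card (\<Union>x\<in>A. \<alpha> x)"
    and Bij2b: "\<forall>B. B \<subseteq> Y \<and> finite B \<longrightarrow> card B \<le> card (\<Union>y\<in>B. \<beta> y)"
  shows "\<forall>f. (\<forall>x\<in>X. f x \<in> \<alpha> x) \<longrightarrow>
           (\<exists>h. bij_betw h X Y \<and> coarse_equivalence X dX Y dY h \<and> close_maps X dY f h)"
proof (intro allI impI)
  fix f assume f: "\<forall>x\<in>X. f x \<in> \<alpha> x"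
  obtain f' where f': "inj_on f' X" "\<forall>x\<in>X. f' x \<in> \<alpha> x"
    using countable_hall_inj_selection[OF ulf_countable[OF ulfX]] alpha_fin Bij2a
    unfolding hall_condition_def by blast
  obtain g where g: "inj_on g Y" "\<forall>y\<in>Y. g y \<in> \<beta> y"
    using countable_hall_inj_selection[OF ulf_countable[OF ulfY]] beta_fin Bij2b
    unfolding hall_condition_def by blast
  have fg: "mutually_inverse_coarse_equivs X dX Y dY f g"
    and f'g: "mutually_inverse_coarse_equivs X dX Y dY f' g"
    using Bij1 f f'(2) g(2) by blast+
  obtain h where h: "bij_betw h X Y" "\<forall>x\<in>X. h x = f' x \<or> (h x \<in> Y \<and> g (h x) = x)"
    using Schroeder_Bernstein_piecewise[OF f'(1) _ g(1)] f'(2) g(2) alpha_fin beta_fin by blast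
  have "close_maps X dY f h"
    using close_maps_piecewise[OF coarse_inverses_close[OF mY fg f'g] _ h(2)] fg
    unfolding mutually_inverse_coarse_equivs_def by blast
  moreover have "coarse_equivalence X dX Y dY h"
    using mutually_inverse_coarse_equivs_close[OF mX mY fg _ \<open>close_maps X dY f h\<close>] h(1)
    unfolding coarse_equivalence_def by (auto simp: bij_betw_def)
  ultimately show "\<exists>h. bij_betw h X Y \<and> coarse_equivalence X dX Y dY h \<and> close_maps X dY f h"
    using h(1) by blast
qed

end
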